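(* Let $n\geqslant2$. Then $\mathrm{SR}(n+1,n)=\binom{n+3}{3}$ and $\mathrm{SR}(n,n)=\binom{n+3}{3}-\left\lfloor\frac{n+2}{2}\right\rfloor\left\lceil\frac{n+2}{2}\right\rceil$.
   Context: Let $p,q$ be distinct primes and $n,m$ positive integers. In $C_{p^nq^m}$ let $C_{p^aq^x}$ be the unique subgroup of order $p^aq^x$, and write $(a,x;b,y)$ for the pair of subgroups $(C_{p^aq^x},C_{p^bq^y})$ with $0\leqslant a\leqslant b\leqslant n$, $0\leqslant x\leqslant y\leqslant m$, $(a,x)\neq(b,y)$. Its midpoint is $(a+x+b+y)/2$, and $R_M$ is the set of all such pairs with midpoint $M$. The simple rainbow number $\mathrm{SR}(n,m)$ is $|R_{(n+m)/2}|$ if $n+m$ is odd, and $|R_{(n+m-1)/2}|$ (which equals $|R_{(n+m+1)/2}|$) if $n+m$ is even. *)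

theory Defs
  imports Complex_Main
begin

text \<open>A pair (a,x;b,y) of subgroups of the cyclic group of order p^n q^m, encoded by
  their exponent pairs ((a,x),(b,y)). The set of such pairs whose midpoint
  (a+x+b+y)/2 equals M is described via the doubled midpoint D = 2M, so that
  R_M corresponds to pairs_with_double_mid n m (2M).\<close>

definition subgroup_pairs :: "nat \<Rightarrow> nat \<Rightarrow> ((nat \<times> nat) \<times> (nat \<times> nat)) set" where
  "subgroup_pairs n m = {((a,x),(b,y)). a \<le> b \<and> b \<le> n \<and> x \<le> y \<and> y \<le> m \<and> (a,x) \<noteq> (b,y)}"

definition R_double :: "nat \<Rightarrow> nat \<Rightarrow> nat \<Rightarrow> ((nat \<times> nat) \<times> (nat \<times> nat)) set" where
  "R_double n m D = {((a,x),(b,y)) \<in> subgroup_pairs n m. a + x + b + y = D}"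

definition SR :: "nat \<Rightarrow> nat \<Rightarrow> nat" where
  "SR n m = (if odd (n + m) then card (R_double n m (n + m))
             else card (R_double n m (n + m - 1)))"

end

theory Submission
  imports Defs
begin

text \<open>Sort the pairs of R(N+1, M+1, D+2) by whether a = b, x = y, or neither. If a = b the pair
  is determined by (x, y), which ranges over the pairs x < y \<le> M+1 of opposite parity; symmetrically
  for x = y. If neither holds, lowering (b, y) to (b-1, y-1) gives a pair of R(N, M, D), and for odd D
  this never produces a degenerate pair. There are \<lfloor>(K+1)/2\<rfloor>\<lfloor>(K+2)/2\<rfloor>
  opposite-parity pairs x < y \<le> K, and two consecutive such counts add up to C(K+2, 2). Hence
  SR(n+1, n) and SR(n, n) + \<lfloor>(n+2)/2\<rfloor>\<lceil>(n+2)/2\<rceil> both grow by C(n+3, 2) per step,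
  as C(n+3, 3) does, and the initial values fix the constants.\<close>

definition odd_pairs :: "nat \<Rightarrow> (nat \<times> nat) set" where
  "odd_pairs K = {(x, y). x < y \<and> y \<le> K \<and> odd (x + y)}"

lemma card_opposite_parity_below: "card {x. x < k \<and> odd (x + k)} = (k + 1) div 2"
proof (induction k rule: nat_induct2)
  case (step k)
  have "{x. x < k + 2 \<and> odd (x + (k + 2))} = insert (k + 1) {x. x < k \<and> odd (x + k)}"
    by (auto simp: less_Suc_eq)
  then show ?case using step by simp
qed (auto simp: Collect_conv_if)

lemma finite_odd_pairs: "finite (odd_pairs K)"
  by (rule finite_subset[of _ "{..K} \<times> {..K}"]) (auto simp: odd_pairs_def)

lemma card_odd_pairs: "card (odd_pairs K) = (K + 1) div 2 * ((K + 2) div 2)"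
proof (induction K)
  case 0
  have "odd_pairs 0 = {}" by (auto simp: odd_pairs_def)
  then show ?case by simp
next
  case (Suc K)
  let ?new = "(\<lambda>x. (x, Suc K)) ` {x. x < Suc K \<and> odd (x + Suc K)}"
  have "odd_pairs (Suc K) = odd_pairs K \<union> ?new"
    by (auto simp: odd_pairs_def le_Suc_eq)
  moreover have "odd_pairs K \<inter> ?new = {}"
    by (auto simp: odd_pairs_def)
  moreover have "card ?new = (K + 2) div 2"
    using card_opposite_parity_below[of "Suc K"] by (subst card_image) (auto simp: inj_on_def)
  ultimately have "card (odd_pairs (Suc K)) = card (odd_pairs K) + (K + 2) div 2"
    by (simp add: card_Un_disjoint finite_odd_pairs)
  also have "\<dots> = (Suc K + 1) div 2 * ((Suc K + 2) div 2)"
    using Suc by (cases "even K") (auto elim!: evenE oddE)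
  finally show ?case .
qed

lemma card_odd_pairs_consecutive:
  "card (odd_pairs K) + card (odd_pairs (Suc K)) = (K + 2) choose 2"
  by (cases "even K") (auto elim!: evenE oddE simp: card_odd_pairs choose_two algebra_simps)

lemma floor_half_mult_ceiling_half:
  "\<lfloor>real k / 2\<rfloor> * \<lceil>real k / 2\<rceil> = int (k div 2 * ((k + 1) div 2))"
proof -
  have "\<lceil>real k / 2\<rceil> = int ((k + 1) div 2)"
  proof (cases "even k")
    case True
    then obtain r where "k = 2 * r" ..
    then show ?thesis by simp
  next
    case False
    then obtain r where "k = 2 * r + 1" ..
    then show ?thesis by (simp add: ceiling_eq_iff)
  qed
  moreover have "\<lfloor>real k / 2\<rfloor> = int (k div 2)"
    using floor_divide_of_nat_eq[of k 2] by simp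
  ultimately show ?thesis by simp
qed

lemma finite_R_double: "finite (R_double N M D)"
  by (rule finite_subset[of _ "({..N} \<times> {..M}) \<times> ({..N} \<times> {..M})"])
    (auto simp: R_double_def subgroup_pairs_def)

lemma card_R_double_split:
  "card (R_double N M D) =
     card {((a, x), (b, y)) \<in> R_double N M D. a = b}
   + card {((a, x), (b, y)) \<in> R_double N M D. x = y}
   + card {((a, x), (b, y)) \<in> R_double N M D. a \<noteq> b \<and> x \<noteq> y}"
proof -
  let ?R = "R_double N M D"
  let ?A = "{((a, x), (b, y)) \<in> ?R. a = b}"
  let ?B = "{((a, x), (b, y)) \<in> ?R. x = y}"
  let ?C = "{((a, x), (b, y)) \<in> ?R. a \<noteq> b \<and> x \<noteq> y}"
  have fin: "finite ?A" "finite ?B" "finite ?C"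
    using finite_R_double[of N M D] by (auto intro: rev_finite_subset)
  have R_eq: "?R = (?A \<union> ?B) \<union> ?C"
    by auto
  have disj: "?A \<inter> ?B = {}" "(?A \<union> ?B) \<inter> ?C = {}"
    by (auto simp: R_double_def subgroup_pairs_def)
  have "card ?R = card ((?A \<union> ?B) \<union> ?C)"
    using arg_cong[where f = card, OF R_eq] .
  also have "\<dots> = card (?A \<union> ?B) + card ?C"
    by (rule card_Un_disjoint[OF finite_UnI[OF fin(1,2)] fin(3) disj(2)])
  also have "card (?A \<union> ?B) = card ?A + card ?B"
    by (rule card_Un_disjoint[OF fin(1,2) disj(1)])
  finally show ?thesis .
qed

lemma card_R_double_same_fst:
  assumes "odd D" "D \<le> 2 * N + 1" "2 * M \<le> D + 1"
  shows "card {((a, x), (b, y)) \<in> R_double N M D. a = b} = card (odd_pairs M)"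
proof -
  let ?A = "{((a, x), (b, y)) \<in> R_double N M D. a = b}"
  let ?\<pi> = "map_prod snd snd"
  have "card ?A = card (?\<pi> ` ?A)"
  proof (rule card_image[symmetric], rule inj_onI)
    fix p q assume "p \<in> ?A" "q \<in> ?A" "?\<pi> p = ?\<pi> q"
    from \<open>p \<in> ?A\<close> obtain a x y where p: "p = ((a, x), (a, y))" "2 * a + x + y = D"
      by (auto simp: R_double_def)
    from \<open>q \<in> ?A\<close> obtain a' x' y' where q: "q = ((a', x'), (a', y'))" "2 * a' + x' + y' = D"
      by (auto simp: R_double_def)
    show "p = q"
      using p q \<open>?\<pi> p = ?\<pi> q\<close> by simp
  qed
  also have "?\<pi> ` ?A = odd_pairs M"
  proof
    show "?\<pi> ` ?A \<subseteq> odd_pairs M"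
    proof
      fix p assume "p \<in> ?\<pi> ` ?A"
      then obtain a x y where p: "p = (x, y)" and "((a, x), (a, y)) \<in> R_double N M D"
        by auto
      then have "x < y" "y \<le> M" "D = 2 * a + (x + y)"
        by (auto simp: R_double_def subgroup_pairs_def)
      then show "p \<in> odd_pairs M"
        using p assms(1) by (simp add: odd_pairs_def)
    qed
    show "odd_pairs M \<subseteq> ?\<pi> ` ?A"
    proof
      fix p assume "p \<in> odd_pairs M"
      then obtain x y where p: "p = (x, y)" and xy: "x < y" "y \<le> M" "odd (x + y)"
        by (auto simp: odd_pairs_def)
      define a where "a = (D - (x + y)) div 2"
      have "x + y \<le> D"
        using xy assms by linarith
      moreover have "even (D - (x + y))"
        using xy assms(1) by (simp add: even_diff_nat)
      ultimately have "2 * a + x + y = D"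
        unfolding a_def by simp
      moreover have "a \<le> N"
        using xy assms \<open>2 * a + x + y = D\<close> by linarith
      ultimately have "((a, x), (a, y)) \<in> ?A"
        using xy by (auto simp: R_double_def subgroup_pairs_def)
      then show "p \<in> ?\<pi> ` ?A"
        by (rule image_eqI[rotated]) (simp add: p)
    qed
  qed
  finally show ?thesis .
qed

lemma card_R_double_same_snd:
  assumes "odd D" "D \<le> 2 * M + 1" "2 * N \<le> D + 1"
  shows "card {((a, x), (b, y)) \<in> R_double N M D. x = y} = card (odd_pairs N)"
proof -
  let ?\<sigma> = "map_prod prod.swap prod.swap :: (nat \<times> nat) \<times> (nat \<times> nat) \<Rightarrow> _"
  let ?A = "{((a, x), (b, y)) \<in> R_double M N D. a = b}"
  have "card ?A = card (?\<sigma> ` ?A)"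
    by (rule card_image[symmetric]) (auto simp: inj_on_def)
  also have "?\<sigma> ` ?A = {((a, x), (b, y)) \<in> R_double N M D. x = y}"
  proof
    show "?\<sigma> ` ?A \<subseteq> {((a, x), (b, y)) \<in> R_double N M D. x = y}"
      by (auto simp: R_double_def subgroup_pairs_def)
    show "{((a, x), (b, y)) \<in> R_double N M D. x = y} \<subseteq> ?\<sigma> ` ?A"
    proof
      fix p assume "p \<in> {((a, x), (b, y)) \<in> R_double N M D. x = y}"
      then obtain a b x where p: "p = ((a, x), (b, x))" "((a, x), (b, x)) \<in> R_double N M D"
        by auto
      then have "((x, a), (x, b)) \<in> ?A"
        by (auto simp: R_double_def subgroup_pairs_def)
      then show "p \<in> ?\<sigma> ` ?A"
        by (rule image_eqI[rotated]) (simp add: p)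
    qed
  qed
  finally show ?thesis
    using card_R_double_same_fst[OF assms] by simp
qed

lemma card_R_double_off_diagonal:
  assumes "odd D"
  shows "card {((a, x), (b, y)) \<in> R_double (Suc N) (Suc M) (D + 2). a \<noteq> b \<and> x \<noteq> y}
    = card (R_double N M D)"
proof -
  let ?shift = "map_prod id (map_prod Suc Suc) :: (nat \<times> nat) \<times> (nat \<times> nat) \<Rightarrow> _"
  let ?C = "{((a, x), (b, y)) \<in> R_double (Suc N) (Suc M) (D + 2). a \<noteq> b \<and> x \<noteq> y}"
  have "card (R_double N M D) = card (?shift ` R_double N M D)"
    by (rule card_image[symmetric]) (auto simp: inj_on_def)
  also have "?shift ` R_double N M D = ?C"
  proof
    show "?shift ` R_double N M D \<subseteq> ?C"
      by (auto simp: R_double_def subgroup_pairs_def)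
    show "?C \<subseteq> ?shift ` R_double N M D"
    proof
      fix p assume "p \<in> ?C"
      then obtain a x b y where p: "p = ((a, x), (b, y))" and
        bounds: "a < b" "b \<le> Suc N" "x < y" "y \<le> Suc M" and sum: "a + x + b + y = D + 2"
        by (auto simp: R_double_def subgroup_pairs_def)
      have "(a, x) \<noteq> (b - 1, y - 1)"
      proof
        assume "(a, x) = (b - 1, y - 1)"
        then have "D = 2 * (a + x)"
          using sum bounds by auto
        with assms show False
          by simp
      qed
      then have "((a, x), (b - 1, y - 1)) \<in> R_double N M D"
        using bounds sum by (auto simp: R_double_def subgroup_pairs_def)
      then show "p \<in> ?shift ` R_double N M D"
        by (rule image_eqI[rotated]) (use p bounds in simp)
    qed
  qed
  finally show ?thesis ..
qed

lemma card_R_double_Suc_Suc: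
  assumes "odd D" "D \<le> 2 * N + 1" "D \<le> 2 * M + 1" "2 * N \<le> D + 1" "2 * M \<le> D + 1"
  shows "card (R_double (Suc N) (Suc M) (D + 2))
    = card (R_double N M D) + card (odd_pairs (Suc M)) + card (odd_pairs (Suc N))"
  using card_R_double_split[of "Suc N" "Suc M" "D + 2"] assms
    card_R_double_same_fst[of "D + 2" "Suc N" "Suc M"] card_R_double_same_snd[of "D + 2" "Suc M" "Suc N"]
    card_R_double_off_diagonal[of D N M]
  by simp

lemma card_R_double_Suc_n_n: "card (R_double (Suc n) n (2 * n + 1)) = (n + 3) choose 3"
proof (induction n)
  case 0
  have "R_double 1 0 1 = {((0, 0), (1, 0))}"
    by (auto simp: R_double_def subgroup_pairs_def le_Suc_eq)
  then show ?case by simp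
next
  case (Suc n)
  have "card (R_double (Suc (Suc n)) (Suc n) (2 * n + 1 + 2))
      = card (R_double (Suc n) n (2 * n + 1)) + card (odd_pairs (Suc n)) + card (odd_pairs (Suc (Suc n)))"
    by (rule card_R_double_Suc_Suc) auto
  also have "\<dots> = ((n + 3) choose 3) + ((n + 3) choose 2)"
    using Suc.IH card_odd_pairs_consecutive[of "Suc n"] by (simp add: numeral_eq_Suc)
  also have "\<dots> = (Suc n + 3) choose 3"
    by (simp add: numeral_eq_Suc)
  finally show ?case
    by (simp add: algebra_simps)
qed

lemma card_R_double_Suc_n_Suc_n:
  "card (R_double (Suc n) (Suc n) (2 * n + 1)) + card (odd_pairs (n + 2)) = (n + 4) choose 3"
proof (induction n)
  case 0
  have "R_double 1 1 1 = {((0, 0), (1, 0)), ((0, 0), (0, 1))}"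
    by (auto simp: R_double_def subgroup_pairs_def le_Suc_eq)
  then show ?case
    by (simp add: card_odd_pairs) (simp add: numeral_eq_Suc)
next
  case (Suc n)
  have "card (R_double (Suc (Suc n)) (Suc (Suc n)) (2 * n + 1 + 2))
      = card (R_double (Suc n) (Suc n) (2 * n + 1)) + card (odd_pairs (Suc (Suc n)))
        + card (odd_pairs (Suc (Suc n)))"
    by (rule card_R_double_Suc_Suc) auto
  then have "card (R_double (Suc (Suc n)) (Suc (Suc n)) (2 * Suc n + 1)) + card (odd_pairs (Suc n + 2))
      = ((n + 4) choose 3) + (card (odd_pairs (n + 2)) + card (odd_pairs (Suc (n + 2))))"
    using Suc.IH by simp
  also have "\<dots> = ((n + 4) choose 3) + ((n + 4) choose 2)"
    using card_odd_pairs_consecutive[of "n + 2"] by (simp add: numeral_eq_Suc)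
  also have "\<dots> = (Suc n + 4) choose 3"
    by (simp add: numeral_eq_Suc)
  finally show ?case .
qed

theorem lemma7p8:
  fixes n :: nat
  assumes "n \<ge> 2"
  shows "SR (n + 1) n = (n + 3) choose 3
    \<and> int (SR n n) = int ((n + 3) choose 3)
        - \<lfloor>real (n + 2) / 2\<rfloor> * \<lceil>real (n + 2) / 2\<rceil>"
proof
  show "SR (n + 1) n = (n + 3) choose 3"
    using card_R_double_Suc_n_n[of n] by (simp add: SR_def mult_2)
next
  obtain k where n: "n = Suc k"
    using assms by (cases n) auto
  have "SR n n = card (R_double (Suc k) (Suc k) (2 * k + 1))"
    by (simp add: SR_def n mult_2)
  moreover have "card (R_double (Suc k) (Suc k) (2 * k + 1)) + card (odd_pairs (k + 2)) = (n + 3) choose 3"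
    using card_R_double_Suc_n_Suc_n[of k] by (simp add: n add.commute)
  moreover have "\<lfloor>real (n + 2) / 2\<rfloor> * \<lceil>real (n + 2) / 2\<rceil> = int (card (odd_pairs (k + 2)))"
    unfolding floor_half_mult_ceiling_half by (simp add: card_odd_pairs n)
  ultimately show "int (SR n n) = int ((n + 3) choose 3)
        - \<lfloor>real (n + 2) / 2\<rfloor> * \<lceil>real (n + 2) / 2\<rceil>"
    by linarith
qed

end
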